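(* Let $(P,\le,A_1\ldots A_k)$ be a regular poset of width $w$, let $N$ be an active node with characteristics $(u,s)$, and let $M$ be a problematic node that is a child of a node of $Q(N)$, with characteristics $(u',s')$. Let $(u'',s'')$ be any characteristics. Then the set $\mathcal{F}$ of all first problematic nodes in $D(M)$ with characteristics $(u'',s'')$ contains at most $(u')^2\le w^2$ nodes.
   Context: Let $(P,\le)$ be a finite poset of width $w$. For $A\subseteq P$ let $A{\uparrow}=\{y: x\le y\text{ for some }x\in A\}$, $A{\downarrow}=\{y: y\le x\text{ for some }x\in A\}$. For maximal antichains $A,B$ write $A\sqsubseteq B$ if $A\subseteq B{\downarrow}$, and $A\sqsubset B$ if also $A\ne B$. For disjoint antichains $A\sqsubset B$, $(A,B,<)$ is the bipartite graph with classes $A,B$ and edges $(a<b)$ for $a\in A,b\in B$, $a<b$; it is regular if every edge lies in a perfect matching. A regular poset $(P,\le,A_1\ldots A_k)$: $A_1,\dots,A_k$ are maximum antichains partitioning $P$, $(\{A_1,\dots,A_k\},\sqsubseteq)$ is a linear order with minimum $A_1$ and maximum $A_2$, $a<b$ for all $a\in A_1,b\in A_2$, and for every $t\in[2,k]$ and every $A_p\sqsubset A_s$ consecutive in $(\{A_1,\dots,A_t\},\sqsubseteq)$ the graph $(A_p,A_s,<)$ is regular. A node is a bipartite graph $N=(X,Y,<)$ where, for some such consecutive pair $A_p\sqsubset A_s$ (at some stage $t$), $X\subseteq A_p$, $Y\subseteq A_s$ and $X\cup Y$ is the vertex set of a connected component of $(A_p,A_s,<)$. Its width is $|X|=|Y|$,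 $\mathrm{Int}(N)=X{\uparrow}\cap Y{\downarrow}$, and its surplus is the largest $k$ such that $|A{\uparrow}\cap Y|\ge\min\{|A|+k,|Y|\}$ for all non-empty $A\subseteq X$ ($\infty$ if $N$ is complete bipartite); its characteristics is the pair (width, surplus). Node tree: the set of all nodes, where when for $t\ge3$ the antichain $A_t$ is inserted between $A_p\sqsubset A_s$ consecutive at stage $t-1$, each node $M$ of $(A_p,A_t,<)$ or $(A_t,A_s,<)$ is a child of the unique node $N$ of $(A_p,A_s,<)$ with $\mathrm{Int}(M)\subset\mathrm{Int}(N)$; it is a rooted tree with root $(A_1,A_2,<)$. A Dilworth clique of width $m$ in a node $(X,Y,<)$ is a set $\{x_1,\dots,x_m,y_1,\dots,y_m\}$ with $x_i\in X$, $y_i\in Y$, $x_i<y_j$ for all $i,j\in[m]$, such that the edges $x_1<y_1,\dots,x_m<y_m$ extend to a perfect matching of $(X,Y,<)$. A node is active if it contains a Dilworth clique of width $\lceil\sqrt{w}\rceil$ and no proper ancestor of it has the same characteristics. For an active node $N$ with characteristics $(u,s)$, $D(N)$ is the set of all non-active nodes $K$ such that $N$ is the first active node on the path from $K$ to the root, and $Q(N)$ consists of $N$ together with all nodes of $D(N)$ with characteristics $(u,s)$. A node is problematic if its width is at least $\lfloor\sqrt{w}\rfloor+1$ and it contains no Dilworth clique of width $\lceil\sqrt{w}\rceil$. For the node $M$, $D(M)$ denotes the set consisting of $M$ and all its descendants in the node tree. A node $K\in D(M)$ is a first problematic node in $D(M)$ if $K$ is problematic and it is the first problematic node with characteristics equal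 to those of $K$ on the path from $M$ to $K$ (in particular $M$ itself is a first problematic node in $D(M)$). *)

theory Defs
  imports Complex_Main "HOL-Library.Extended_Nat"
begin

(* The poset is a finite carrier set P inside a type with a partial order;
   the order of the poset is the restriction of <= to P. *)

definition antichain :: "'a::order set \<Rightarrow> 'a set \<Rightarrow> bool" where
  "antichain P C \<longleftrightarrow> C \<subseteq> P \<and> (\<forall>x\<in>C. \<forall>y\<in>C. x \<le> y \<longrightarrow> x = y)"

definition width :: "'a::order set \<Rightarrow> nat" where
  "width P = Max (card ` {C. antichain P C})"

definition maximum_antichain :: "'a::order set \<Rightarrow> 'a set \<Rightarrow> bool" where
  "maximum_antichain P C \<longleftrightarrow> antichain P C \<and> card C = width P"

definition up :: "'a::order set \<Rightarrow> 'a set \<Rightarrow> 'a set" where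
  "up P B = {y\<in>P. \<exists>x\<in>B. x \<le> y}"

definition down :: "'a::order set \<Rightarrow> 'a set \<Rightarrow> 'a set" where
  "down P B = {y\<in>P. \<exists>x\<in>B. y \<le> x}"

definition sqle :: "'a::order set \<Rightarrow> 'a set \<Rightarrow> 'a set \<Rightarrow> bool" where
  "sqle P B C \<longleftrightarrow> B \<subseteq> down P C"

definition sqlt :: "'a::order set \<Rightarrow> 'a set \<Rightarrow> 'a set \<Rightarrow> bool" where
  "sqlt P B C \<longleftrightarrow> sqle P B C \<and> B \<noteq> C"

definition perfect_matching :: "'a::order set \<Rightarrow> 'a set \<Rightarrow> ('a \<Rightarrow> 'a) \<Rightarrow> bool" where
  "perfect_matching X Y f \<longleftrightarrow> bij_betw f X Y \<and> (\<forall>x\<in>X. x < f x)"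

definition regular_bip :: "'a::order set \<Rightarrow> 'a set \<Rightarrow> bool" where
  "regular_bip X Y \<longleftrightarrow>
     (\<forall>a\<in>X. \<forall>b\<in>Y. a < b \<longrightarrow> (\<exists>f. perfect_matching X Y f \<and> f a = b))"

definition consec :: "'a::order set \<Rightarrow> (nat \<Rightarrow> 'a set) \<Rightarrow> nat \<Rightarrow> nat \<Rightarrow> nat \<Rightarrow> bool" where
  "consec P A t p s \<longleftrightarrow> p \<in> {1..t} \<and> s \<in> {1..t} \<and> sqlt P (A p) (A s) \<and>
     \<not> (\<exists>q\<in>{1..t}. sqlt P (A p) (A q) \<and> sqlt P (A q) (A s))"

definition regular_poset :: "'a::order set \<Rightarrow> (nat \<Rightarrow> 'a set) \<Rightarrow> nat \<Rightarrow> bool" where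
  "regular_poset P A k \<longleftrightarrow>
     finite P \<and> 2 \<le> k \<and>
     (\<forall>i\<in>{1..k}. maximum_antichain P (A i) \<and> A i \<noteq> {}) \<and>
     (\<forall>i\<in>{1..k}. \<forall>j\<in>{1..k}. i \<noteq> j \<longrightarrow> A i \<inter> A j = {}) \<and>
     (\<Union>i\<in>{1..k}. A i) = P \<and>
     (\<forall>i\<in>{1..k}. \<forall>j\<in>{1..k}. sqle P (A i) (A j) \<or> sqle P (A j) (A i)) \<and>
     (\<forall>i\<in>{1..k}. \<forall>j\<in>{1..k}. sqle P (A i) (A j) \<and> sqle P (A j) (A i) \<longrightarrow> A i = A j) \<and>
     (\<forall>i\<in>{1..k}. \<forall>j\<in>{1..k}. \<forall>l\<in>{1..k}.
        sqle P (A i) (A j) \<and> sqle P (A j) (A l) \<longrightarrow> sqle P (A i) (A l)) \<and>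
     (\<forall>i\<in>{1..k}. sqle P (A 1) (A i) \<and> sqle P (A i) (A 2)) \<and>
     (\<forall>a\<in>A 1. \<forall>b\<in>A 2. a < b) \<and>
     (\<forall>t\<in>{2..k}. \<forall>p s. consec P A t p s \<longrightarrow> regular_bip (A p) (A s))"

definition bip_adj :: "'a::order set \<Rightarrow> 'a set \<Rightarrow> 'a \<Rightarrow> 'a \<Rightarrow> bool" where
  "bip_adj X Y u v \<longleftrightarrow> (u \<in> X \<and> v \<in> Y \<and> u < v) \<or> (u \<in> Y \<and> v \<in> X \<and> v < u)"

definition component :: "'a::order set \<Rightarrow> 'a set \<Rightarrow> 'a set \<Rightarrow> bool" where
  "component X Y C \<longleftrightarrow> (\<exists>u\<in>X \<union> Y. C = {v. (bip_adj X Y)\<^sup>*\<^sup>* u v})"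

(* a node is represented by the pair (X,Y) *)
definition comp_node :: "'a::order set \<Rightarrow> 'a set \<Rightarrow> 'a set \<times> 'a set \<Rightarrow> bool" where
  "comp_node X Y N \<longleftrightarrow> (\<exists>C. component X Y C \<and> fst N = C \<inter> X \<and> snd N = C \<inter> Y)"

definition is_node :: "'a::order set \<Rightarrow> (nat \<Rightarrow> 'a set) \<Rightarrow> nat \<Rightarrow> 'a set \<times> 'a set \<Rightarrow> bool" where
  "is_node P A k N \<longleftrightarrow> (\<exists>t\<in>{2..k}. \<exists>p s. consec P A t p s \<and> comp_node (A p) (A s) N)"

definition Int_node :: "'a::order set \<Rightarrow> 'a set \<times> 'a set \<Rightarrow> 'a set" where
  "Int_node P N = up P (fst N) \<inter> down P (snd N)"

definition childof :: "'a::order set \<Rightarrow> (nat \<Rightarrow> 'a set) \<Rightarrow> nat \<Rightarrow> 'a set \<times> 'a set \<Rightarrow> 'a set \<times> 'a set \<Rightarrow> bool" where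
  "childof P A k M N \<longleftrightarrow>
     (\<exists>t\<in>{3..k}. \<exists>p s. consec P A (t - 1) p s \<and> sqlt P (A p) (A t) \<and> sqlt P (A t) (A s) \<and>
        comp_node (A p) (A s) N \<and> (comp_node (A p) (A t) M \<or> comp_node (A t) (A s) M) \<and>
        Int_node P M \<subset> Int_node P N)"

definition proper_anc :: "'a::order set \<Rightarrow> (nat \<Rightarrow> 'a set) \<Rightarrow> nat \<Rightarrow> 'a set \<times> 'a set \<Rightarrow> 'a set \<times> 'a set \<Rightarrow> bool" where
  "proper_anc P A k N K \<longleftrightarrow> (childof P A k)\<^sup>+\<^sup>+ K N"

definition node_width :: "'a set \<times> 'a set \<Rightarrow> nat" where
  "node_width N = card (fst N)"

definition complete_bip :: "'a::order set \<times> 'a set \<Rightarrow> bool" where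
  "complete_bip N \<longleftrightarrow> (\<forall>x\<in>fst N. \<forall>y\<in>snd N. x < y)"

definition surplus_cond :: "'a::order set \<Rightarrow> 'a set \<times> 'a set \<Rightarrow> nat \<Rightarrow> bool" where
  "surplus_cond P N j \<longleftrightarrow>
     (\<forall>B. B \<noteq> {} \<and> B \<subseteq> fst N \<longrightarrow> card (up P B \<inter> snd N) \<ge> min (card B + j) (card (snd N)))"

definition surplus :: "'a::order set \<Rightarrow> 'a set \<times> 'a set \<Rightarrow> enat" where
  "surplus P N = (if complete_bip N then \<infinity> else enat (GREATEST j. surplus_cond P N j))"

definition charac :: "'a::order set \<Rightarrow> 'a set \<times> 'a set \<Rightarrow> nat \<times> enat" where
  "charac P N = (node_width N, surplus P N)"

definition has_dilworth_clique :: "'a::order set \<times> 'a set \<Rightarrow> nat \<Rightarrow> bool" where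
  "has_dilworth_clique N m \<longleftrightarrow>
     (\<exists>xs ys :: nat \<Rightarrow> 'a. inj_on xs {..<m} \<and> inj_on ys {..<m} \<and>
        (\<forall>i<m. xs i \<in> fst N \<and> ys i \<in> snd N) \<and>
        (\<forall>i<m. \<forall>j<m. xs i < ys j) \<and>
        (\<exists>f. perfect_matching (fst N) (snd N) f \<and> (\<forall>i<m. f (xs i) = ys i)))"

definition active :: "'a::order set \<Rightarrow> (nat \<Rightarrow> 'a set) \<Rightarrow> nat \<Rightarrow> 'a set \<times> 'a set \<Rightarrow> bool" where
  "active P A k N \<longleftrightarrow> is_node P A k N \<and>
     has_dilworth_clique N (nat \<lceil>sqrt (real (width P))\<rceil>) \<and>
     \<not> (\<exists>N'. proper_anc P A k N' N \<and> charac P N' = charac P N)"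

definition Dact :: "'a::order set \<Rightarrow> (nat \<Rightarrow> 'a set) \<Rightarrow> nat \<Rightarrow> 'a set \<times> 'a set \<Rightarrow> ('a set \<times> 'a set) set" where
  "Dact P A k N = {K. is_node P A k K \<and> \<not> active P A k K \<and> proper_anc P A k N K \<and>
      \<not> (\<exists>N'. active P A k N' \<and> proper_anc P A k N' K \<and> proper_anc P A k N N')}"

definition Qset :: "'a::order set \<Rightarrow> (nat \<Rightarrow> 'a set) \<Rightarrow> nat \<Rightarrow> 'a set \<times> 'a set \<Rightarrow> ('a set \<times> 'a set) set" where
  "Qset P A k N = insert N {K \<in> Dact P A k N. charac P K = charac P N}"

definition problematic :: "'a::order set \<Rightarrow> (nat \<Rightarrow> 'a set) \<Rightarrow> nat \<Rightarrow> 'a set \<times> 'a set \<Rightarrow> bool" where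
  "problematic P A k M \<longleftrightarrow> is_node P A k M \<and>
     node_width M \<ge> nat \<lfloor>sqrt (real (width P))\<rfloor> + 1 \<and>
     \<not> has_dilworth_clique M (nat \<lceil>sqrt (real (width P))\<rceil>)"

definition desc :: "'a::order set \<Rightarrow> (nat \<Rightarrow> 'a set) \<Rightarrow> nat \<Rightarrow> 'a set \<times> 'a set \<Rightarrow> ('a set \<times> 'a set) set" where
  "desc P A k M = {K. K = M \<or> proper_anc P A k M K}"

definition first_problematic :: "'a::order set \<Rightarrow> (nat \<Rightarrow> 'a set) \<Rightarrow> nat \<Rightarrow> 'a set \<times> 'a set \<Rightarrow> 'a set \<times> 'a set \<Rightarrow> bool" where
  "first_problematic P A k M K \<longleftrightarrow> K \<in> desc P A k M \<and> problematic P A k K \<and>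
     \<not> (\<exists>K'. K' \<in> desc P A k M \<and> proper_anc P A k K' K \<and> problematic P A k K' \<and>
            charac P K' = charac P K)"

end

theory Submission
  imports Defs
begin

text \<open>Say that \<open>x\<close> splits a node \<open>K\<close> if \<open>x\<close> lies below some, but not all, elements of the
  lower class of \<open>K\<close>, and let the gain of \<open>K\<close> at \<open>x\<close> be the number of upper minus the number of
  lower elements of \<open>K\<close> above \<open>x\<close>. Connected regular bipartite graphs have positive surplus, so
  the gain is at least 1 where \<open>x\<close> splits \<open>K\<close> and at least 0 elsewhere; and when a level is
  inserted, the gain of a node is the sum of the gains of its children. Hence, in a family of
  nodes below \<open>M\<close> none of which descends from another, at most \<open>gain x M \<le> |X| - 1\<close> members are
  split by a given \<open>x\<close> in the lower class \<open>X\<close> of \<open>M\<close>. The first problematic nodes with fixed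
  characteristics form such a family, and each of them is split by some \<open>x \<in> X\<close>: otherwise,
  composing matchings through the levels of \<open>M\<close> and \<open>K\<close> yields a Dilworth clique of width
  \<open>|K| \<ge> \<lceil>\<surd>w\<rceil>\<close> in \<open>M\<close>. So there are at most \<open>|X| (|X| - 1) \<le> u'\<^sup>2\<close> of them.\<close>

section \<open>Components of the comparability graph between two antichains\<close>

definition component_of :: "'a::order set \<Rightarrow> 'a set \<Rightarrow> 'a \<Rightarrow> 'a set \<times> 'a set" where
  "component_of X Y u = ({v. (bip_adj X Y)\<^sup>*\<^sup>* u v} \<inter> X, {v. (bip_adj X Y)\<^sup>*\<^sup>* u v} \<inter> Y)"

lemma comp_node_iff: "comp_node X Y N \<longleftrightarrow> (\<exists>u \<in> X \<union> Y. N = component_of X Y u)"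
  unfolding comp_node_def component_def component_of_def by (auto simp: prod_eq_iff)

lemma comp_node_component_of: "u \<in> X \<union> Y \<Longrightarrow> comp_node X Y (component_of X Y u)"
  by (auto simp: comp_node_iff)

lemma comp_node_subset:
  assumes "comp_node X Y N"
  shows "fst N \<subseteq> X" and "snd N \<subseteq> Y"
  using assms by (auto simp: comp_node_iff component_of_def)

lemma mem_component_of_self: "u \<in> X \<union> Y \<Longrightarrow> u \<in> fst (component_of X Y u) \<union> snd (component_of X Y u)"
  by (auto simp: component_of_def)

lemma component_of_subset_closed:
  assumes "u \<in> S" and "\<And>v w. v \<in> S \<Longrightarrow> bip_adj X Y v w \<Longrightarrow> w \<in> S"
  shows "fst (component_of X Y u) \<union> snd (component_of X Y u) \<subseteq> S"
proof -
  have "w \<in> S" if "(bip_adj X Y)\<^sup>*\<^sup>* u w" for w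
    using that by induction (auto intro: assms)
  then show ?thesis by (auto simp: component_of_def)
qed

lemma component_of_eq_if_mem:
  assumes "v \<in> fst (component_of X Y u) \<union> snd (component_of X Y u)"
  shows "component_of X Y v = component_of X Y u"
proof -
  have uv: "(bip_adj X Y)\<^sup>*\<^sup>* u v" using assms by (auto simp: component_of_def)
  have "symp (bip_adj X Y)\<^sup>*\<^sup>*" by (rule symp_rtranclp) (auto simp: symp_def bip_adj_def)
  then have "(bip_adj X Y)\<^sup>*\<^sup>* v u" using uv by (rule sympD)
  with uv show ?thesis unfolding component_of_def by (auto intro: rtranclp_trans)
qed

lemma comp_node_eq_component_of:
  assumes "comp_node X Y N" and "v \<in> fst N \<union> snd N"
  shows "N = component_of X Y v"
proof -
  obtain u where "N = component_of X Y u" using assms(1) by (auto simp: comp_node_iff)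
  with assms(2) show ?thesis using component_of_eq_if_mem by metis
qed

lemma comp_node_eq:
  assumes "comp_node X Y N" and "comp_node X Y N'"
    and "v \<in> fst N \<union> snd N" and "v \<in> fst N' \<union> snd N'"
  shows "N = N'"
  using assms comp_node_eq_component_of by metis

lemma comp_node_closed_up:
  assumes "comp_node X Y N" and "x \<in> fst N" and "y \<in> Y" and "x < y"
  shows "y \<in> snd N"
proof -
  have "N = component_of X Y x" using assms(1,2) comp_node_eq_component_of by blast
  moreover have "bip_adj X Y x y"
    using assms comp_node_subset(1)[OF assms(1)] by (auto simp: bip_adj_def)
  ultimately show ?thesis using assms(3) by (auto simp: component_of_def)
qed

lemma comp_node_closed_down:
  assumes "comp_node X Y N" and "y \<in> snd N" and "x \<in> X" and "x < y"
  shows "x \<in> fst N"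
proof -
  have "N = component_of X Y y" using assms(1,2) comp_node_eq_component_of by blast
  moreover have "bip_adj X Y y x"
    using assms comp_node_subset(2)[OF assms(1)] by (auto simp: bip_adj_def)
  ultimately show ?thesis using assms(3) by (auto simp: component_of_def)
qed

lemma perfect_matching_component:
  assumes f: "perfect_matching X Y f" and N: "comp_node X Y N"
  shows "perfect_matching (fst N) (snd N) f"
proof -
  have bij: "bij_betw f X Y" and less: "\<forall>x\<in>X. x < f x"
    using f by (simp_all add: perfect_matching_def)
  note sub = comp_node_subset[OF N]
  have "f ` fst N \<subseteq> snd N"
    using sub bij less comp_node_closed_up[OF N] by (blast dest: bij_betwE)
  moreover have "snd N \<subseteq> f ` fst N"
  proof
    fix y assume y: "y \<in> snd N"
    then obtain x where "x \<in> X" "y = f x" using sub(2) bij unfolding bij_betw_def by blast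
    with y less comp_node_closed_down[OF N] show "y \<in> f ` fst N" by blast
  qed
  moreover have "inj_on f (fst N)"
    using bij sub(1) by (auto simp: bij_betw_def intro: inj_on_subset)
  ultimately show ?thesis
    using less sub(1) unfolding perfect_matching_def bij_betw_def by blast
qed

lemma comp_node_nonempty:
  assumes "perfect_matching X Y f" and "comp_node X Y N"
  shows "fst N \<noteq> {}" and "snd N \<noteq> {}"
proof -
  have fN: "bij_betw f (fst N) (snd N)"
    using perfect_matching_component[OF assms] by (simp add: perfect_matching_def)
  obtain u where "u \<in> X \<union> Y" "N = component_of X Y u" using assms(2) by (auto simp: comp_node_iff)
  then have "fst N \<union> snd N \<noteq> {}" using mem_component_of_self by blast
  with fN show "fst N \<noteq> {}" and "snd N \<noteq> {}" by (auto simp: bij_betw_def)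
qed

lemma comp_node_subset_Int_node:
  assumes "perfect_matching X Y f" and N: "comp_node X Y N" and "X \<union> Y \<subseteq> P"
  shows "fst N \<union> snd N \<subseteq> Int_node P N"
proof -
  have fN: "bij_betw f (fst N) (snd N)" "\<forall>x\<in>fst N. x < f x"
    using perfect_matching_component[OF assms(1,2)] by (simp_all add: perfect_matching_def)
  have P: "fst N \<subseteq> P" "snd N \<subseteq> P" using comp_node_subset[OF N] assms(3) by auto
  have "x \<in> down P (snd N)" if "x \<in> fst N" for x
  proof -
    have "f x \<in> snd N" using fN(1) that by (rule bij_betw_apply)
    moreover have "x \<le> f x" using that fN(2) by (simp add: order.strict_implies_order)
    ultimately show ?thesis using that P unfolding down_def by blast
  qed
  moreover have "y \<in> up P (fst N)" if "y \<in> snd N" for y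
  proof -
    have "y \<in> f ` fst N" using that fN(1) by (simp add: bij_betw_def)
    then obtain x where x: "x \<in> fst N" "y = f x" by blast
    then have "x \<le> y" using fN(2) by (simp add: order.strict_implies_order)
    then show ?thesis using x(1) that P unfolding up_def by blast
  qed
  moreover have "fst N \<subseteq> up P (fst N)" "snd N \<subseteq> down P (snd N)"
    using P unfolding up_def down_def by auto
  ultimately show ?thesis unfolding Int_node_def by blast
qed

lemma perfect_matching_image_neighbours:
  assumes g: "perfect_matching X Y g" and N: "comp_node X Y N" and "finite Y"
    and B: "B \<subseteq> fst N" and le: "card {y \<in> snd N. \<exists>x\<in>B. x < y} \<le> card B"
  shows "g ` B = {y \<in> snd N. \<exists>x\<in>B. x < y}"
proof -
  have gN: "bij_betw g (fst N) (snd N)" "\<forall>x\<in>fst N. x < g x"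
    using perfect_matching_component[OF g N] by (simp_all add: perfect_matching_def)
  then have "g ` B \<subseteq> {y \<in> snd N. \<exists>x\<in>B. x < y}" using B by (auto dest: bij_betwE)
  moreover have "card (g ` B) = card B"
    using gN(1) B by (auto simp: bij_betw_def intro: card_image inj_on_subset)
  moreover have "finite {y \<in> snd N. \<exists>x\<in>B. x < y}"
    using finite_subset[OF comp_node_subset(2)[OF N] \<open>finite Y\<close>] by simp
  ultimately show ?thesis using le by (metis card_seteq)
qed

text \<open>Otherwise every perfect matching maps \<open>B\<close> onto its neighbourhood, so by regularity no edge
  leaves \<open>B\<close> together with its neighbourhood, contradicting connectedness.\<close>

lemma comp_node_expands:
  assumes reg: "regular_bip X Y" and disj: "X \<inter> Y = {}" and fin: "finite Y"
    and N: "comp_node X Y N" and B: "B \<subseteq> fst N" "B \<noteq> {}" "B \<noteq> fst N"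
  shows "card B < card {y \<in> snd N. \<exists>x\<in>B. x < y}"
proof (rule ccontr)
  define NB where "NB = {y \<in> snd N. \<exists>x\<in>B. x < y}"
  assume "\<not> card B < card {y \<in> snd N. \<exists>x\<in>B. x < y}"
  then have image: "g ` B = NB" if "perfect_matching X Y g" for g
    using perfect_matching_image_neighbours[OF that N fin B(1)] unfolding NB_def by simp
  note sub = comp_node_subset[OF N]
  have closed: "w \<in> B \<union> NB" if v: "v \<in> B \<union> NB" and vw: "bip_adj X Y v w" for v w
  proof -
    consider "v \<in> X" "w \<in> Y" "v < w" | "v \<in> Y" "w \<in> X" "w < v"
      using vw unfolding bip_adj_def by blast
    then show ?thesis
    proof cases
      case 1
      then have "v \<in> B" using v disj sub(2) unfolding NB_def by blast
      with 1 B(1) comp_node_closed_up[OF N] show ?thesis unfolding NB_def by blast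
    next
      case 2
      then have "v \<in> NB" using v disj B(1) sub(1) by blast
      obtain g where g: "perfect_matching X Y g" "g w = v"
        using reg 2 unfolding regular_bip_def by blast
      then obtain x where "x \<in> B" "g x = g w" using image[OF g(1)] \<open>v \<in> NB\<close> by force
      moreover have "inj_on g X" using g(1) by (simp add: perfect_matching_def bij_betw_def)
      ultimately show ?thesis using 2 B(1) sub(1) by (metis UnI1 inj_onD subsetD)
    qed
  qed
  obtain b w where b: "b \<in> B" and w: "w \<in> fst N" "w \<notin> B" using B by blast
  have "N = component_of X Y b" using N b B(1) by (intro comp_node_eq_component_of) auto
  then have "w \<in> B \<union> NB"
    using component_of_subset_closed[of b "B \<union> NB" X Y] closed b w(1) by auto
  then show False using w sub disj unfolding NB_def by blast
qed

lemma has_dilworth_cliqueI: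
  assumes f: "perfect_matching (fst N) (snd N) f"
    and G: "G \<subseteq> fst N" "finite G" "c \<le> card G"
    and clique: "\<And>x x'. x \<in> G \<Longrightarrow> x' \<in> G \<Longrightarrow> x < f x'"
  shows "has_dilworth_clique N c"
proof -
  obtain S where S: "S \<subseteq> G" "card S = c" "finite S"
    using obtain_subset_with_card_n[OF G(3)] by blast
  then obtain xs where xs: "bij_betw xs {..<c} S"
    using ex_bij_betw_nat_finite[OF S(3)] by (auto simp: atLeast0LessThan)
  have inj_f: "inj_on f (fst N)" and f_into: "\<forall>x\<in>fst N. f x \<in> snd N"
    using f by (auto simp: perfect_matching_def bij_betw_def)
  have xs_in: "xs i \<in> G" if "i < c" for i
    using xs S(1) that by (auto dest: bij_betwE)
  have "inj_on (f \<circ> xs) {..<c}"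
    using xs G(1) xs_in by (intro comp_inj_on inj_on_subset[OF inj_f]) (auto simp: bij_betw_def)
  then show ?thesis
    unfolding has_dilworth_clique_def using xs xs_in G(1) f_into f clique
    by (intro exI[of _ xs] exI[of _ "f \<circ> xs"]) (auto simp: bij_betw_def)
qed

lemma card_bij_betw_preimage:
  assumes "bij_betw g X Y" and "S \<subseteq> Y"
  shows "card {x \<in> X. g x \<in> S} = card S"
proof -
  have "g ` {x \<in> X. g x \<in> S} = S" using assms by (auto simp: bij_betw_def)
  then have "bij_betw g {x \<in> X. g x \<in> S} S" by (intro bij_betw_subset[OF assms(1)]) auto
  then show ?thesis by (rule bij_betw_same_card)
qed

lemma perfect_matching_compose_le:
  assumes g: "bij_betw g X X'" "\<forall>x\<in>X. x \<le> g x"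
    and f: "perfect_matching X' Y' f"
    and h: "bij_betw h Y' Y" "\<forall>y\<in>Y'. y \<le> h y"
  shows "perfect_matching X Y (h \<circ> f \<circ> g)"
proof -
  have f': "bij_betw f X' Y'" "\<forall>x\<in>X'. x < f x" using f by (simp_all add: perfect_matching_def)
  have "x < h (f (g x))" if "x \<in> X" for x
  proof -
    have "g x \<in> X'" "f (g x) \<in> Y'" using that g(1) f'(1) by (auto dest: bij_betwE)
    then have "x \<le> g x" "g x < f (g x)" "f (g x) \<le> h (f (g x))" using that g(2) f'(2) h(2) by auto
    then show ?thesis by order
  qed
  moreover have "bij_betw (h \<circ> f \<circ> g) X Y" using g(1) f'(1) h(1) by (auto intro: bij_betw_trans)
  ultimately show ?thesis by (simp add: perfect_matching_def)
qed

section \<open>Splitting and gain\<close>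

definition splits :: "'a::order set \<Rightarrow> 'a \<Rightarrow> 'a set \<times> 'a set \<Rightarrow> bool" where
  "splits P x N \<longleftrightarrow> up P {x} \<inter> fst N \<noteq> {} \<and> \<not> fst N \<subseteq> up P {x}"

definition gain :: "'a::order set \<Rightarrow> 'a \<Rightarrow> 'a set \<times> 'a set \<Rightarrow> int" where
  "gain P x N = int (card (up P {x} \<inter> snd N)) - int (card (up P {x} \<inter> fst N))"

lemma splits_le_gain:
  assumes reg: "regular_bip X Y" and f: "perfect_matching X Y f" and disj: "X \<inter> Y = {}"
    and fin: "finite Y" and N: "comp_node X Y N" and "Y \<subseteq> P"
  shows "of_bool (splits P x N) \<le> gain P x N"
proof -
  define B where "B = up P {x} \<inter> fst N"
  define NB where "NB = {y \<in> snd N. \<exists>z\<in>B. z < y}"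
  note sub = comp_node_subset[OF N]
  have fN: "bij_betw f (fst N) (snd N)" "\<forall>z\<in>fst N. z < f z"
    using perfect_matching_component[OF f N] by (simp_all add: perfect_matching_def)
  have fin_up: "finite (up P {x} \<inter> snd N)" using finite_subset[OF sub(2) fin] by simp
  have NB_up: "NB \<subseteq> up P {x} \<inter> snd N"
  proof
    fix y assume "y \<in> NB"
    then obtain z where "y \<in> snd N" "z \<in> B" "z < y" unfolding NB_def by blast
    then show "y \<in> up P {x} \<inter> snd N"
      using sub(2) \<open>Y \<subseteq> P\<close> unfolding B_def up_def by (auto dest: order.strict_implies_order)
  qed
  have "card B \<le> card NB"
  proof (rule card_inj_on_le)
    show "inj_on f B" using fN(1) unfolding B_def bij_betw_def by (auto intro: inj_on_subset)
    show "f ` B \<subseteq> NB"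
    proof
      fix y assume "y \<in> f ` B"
      then obtain z where z: "z \<in> B" "y = f z" by blast
      then have "z \<in> fst N" by (simp add: B_def)
      with z fN show "y \<in> NB" unfolding NB_def by (auto simp: bij_betw_apply)
    qed
    show "finite NB" using finite_subset[OF NB_up fin_up] .
  qed
  moreover have "card B < card NB" if "splits P x N"
    using that unfolding NB_def
    by (intro comp_node_expands[OF reg disj fin N]) (auto simp: B_def splits_def)
  moreover have "card NB \<le> card (up P {x} \<inter> snd N)" using card_mono[OF fin_up NB_up] .
  ultimately show ?thesis unfolding gain_def B_def[symmetric] by (cases "splits P x N") auto
qed

lemma sum_card_components:
  assumes "finite Cs" and "\<And>C. C \<in> Cs \<Longrightarrow> comp_node X Y C" and "finite X" and "finite Y"
  shows "(\<Sum>C\<in>Cs. card (T \<inter> fst C)) = card (T \<inter> \<Union>(fst ` Cs))"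
    and "(\<Sum>C\<in>Cs. card (T \<inter> snd C)) = card (T \<inter> \<Union>(snd ` Cs))"
proof -
  have fin: "finite (T \<inter> fst C)" "finite (T \<inter> snd C)" if "C \<in> Cs" for C
    using finite_subset[OF comp_node_subset(1)[OF assms(2)[OF that]] assms(3)]
      finite_subset[OF comp_node_subset(2)[OF assms(2)[OF that]] assms(4)] by simp_all
  have disj: "(T \<inter> fst C) \<inter> (T \<inter> fst C') = {}" "(T \<inter> snd C) \<inter> (T \<inter> snd C') = {}"
    if "C \<in> Cs" "C' \<in> Cs" "C \<noteq> C'" for C C'
    using that comp_node_eq[OF assms(2)[OF that(1)] assms(2)[OF that(2)]] by blast+
  have "card (\<Union>C\<in>Cs. T \<inter> fst C) = (\<Sum>C\<in>Cs. card (T \<inter> fst C))"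
    and "card (\<Union>C\<in>Cs. T \<inter> snd C) = (\<Sum>C\<in>Cs. card (T \<inter> snd C))"
    using assms(1) fin disj by (intro card_UN_disjoint; blast)+
  moreover have "(\<Union>C\<in>Cs. T \<inter> fst C) = T \<inter> \<Union>(fst ` Cs)" "(\<Union>C\<in>Cs. T \<inter> snd C) = T \<inter> \<Union>(snd ` Cs)"
    by blast+
  ultimately show "(\<Sum>C\<in>Cs. card (T \<inter> fst C)) = card (T \<inter> \<Union>(fst ` Cs))"
    and "(\<Sum>C\<in>Cs. card (T \<inter> snd C)) = card (T \<inter> \<Union>(snd ` Cs))"
    by (simp_all only:)
qed

lemma sum_gain_components:
  assumes "finite Cs" and "\<And>C. C \<in> Cs \<Longrightarrow> comp_node X Y C" and "finite X" and "finite Y"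
  shows "(\<Sum>C\<in>Cs. gain P x C)
    = int (card (up P {x} \<inter> \<Union>(snd ` Cs))) - int (card (up P {x} \<inter> \<Union>(fst ` Cs)))"
  unfolding gain_def sum_subtractf
  by (simp only: of_nat_sum[symmetric] sum_card_components[OF assms])

section \<open>The node tree\<close>

lemma childof_Int_node: "childof P A k C N \<Longrightarrow> Int_node P C \<subset> Int_node P N"
  unfolding childof_def by blast

lemma desc_Int_node:
  assumes "K \<in> desc P A k N"
  shows "Int_node P K \<subseteq> Int_node P N"
proof -
  have "Int_node P K \<subseteq> Int_node P N" if "(childof P A k)\<^sup>+\<^sup>+ K N"
    using that by induction (auto dest: childof_Int_node)
  then show ?thesis using assms unfolding desc_def proper_anc_def by blast
qed

lemma desc_cases:
  assumes "K \<in> desc P A k N"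
  shows "K = N \<or> (\<exists>C. childof P A k C N \<and> K \<in> desc P A k C)"
proof (cases "K = N")
  case False
  then have "(childof P A k)\<^sup>+\<^sup>+ K N" using assms unfolding desc_def proper_anc_def by simp
  then obtain C where "childof P A k C N" "K = C \<or> (childof P A k)\<^sup>+\<^sup>+ K C"
    by (cases rule: tranclp.cases) auto
  then show ?thesis unfolding desc_def proper_anc_def by blast
qed simp

lemma first_problematic_incomparable:
  assumes "first_problematic P A k M K" and "first_problematic P A k M K'"
    and "charac P K = charac P K'"
  shows "\<not> proper_anc P A k K K'"
proof
  assume "proper_anc P A k K K'"
  moreover from assms(2) have "\<not> (K \<in> desc P A k M \<and> proper_anc P A k K K' \<and> problematic P A k K
      \<and> charac P K = charac P K')"
    unfolding first_problematic_def by blast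
  ultimately show False using assms(1,3) unfolding first_problematic_def by blast
qed

section \<open>Levels of a regular poset\<close>

lemma sqle_trans:
  assumes "sqle P B C" and "sqle P C D"
  shows "sqle P B D"
  using assms unfolding sqle_def down_def by (blast intro: order_trans)

lemma antichain_sqle_antisym:
  assumes "antichain P B" and "antichain P C" and "sqle P B C" and "sqle P C B"
  shows "B = C"
proof -
  have "B \<subseteq> C" if "antichain P B" "sqle P B C" "sqle P C B" for B C
  proof
    fix x assume "x \<in> B"
    then obtain c where "c \<in> C" "x \<le> c" using \<open>sqle P B C\<close> unfolding sqle_def down_def by blast
    then obtain b where "b \<in> B" "c \<le> b" using \<open>sqle P C B\<close> unfolding sqle_def down_def by blast
    with \<open>antichain P B\<close> \<open>x \<in> B\<close> \<open>x \<le> c\<close> have "x = b"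
      unfolding antichain_def by (meson order_trans)
    with \<open>x \<le> c\<close> \<open>c \<le> b\<close> \<open>c \<in> C\<close> show "x \<in> C" by auto
  qed
  with assms show ?thesis by blast
qed

lemma card_antichain_le_width:
  assumes "finite P" and "antichain P C"
  shows "card C \<le> width P"
proof -
  have "{C. antichain P C} \<subseteq> Pow P" by (auto simp: antichain_def)
  then have "finite {C. antichain P C}" by (rule finite_subset) (simp add: assms(1))
  with assms(2) show ?thesis
    unfolding width_def by (auto intro: Max_ge)
qed

locale regular_levels =
  fixes P :: "'a::order set" and A :: "nat \<Rightarrow> 'a set" and k :: nat
  assumes finite_carrier: "finite P"
    and two_le_k: "2 \<le> k"
    and level_maximum_antichain: "i \<in> {1..k} \<Longrightarrow> maximum_antichain P (A i)"
    and level_nonempty: "i \<in> {1..k} \<Longrightarrow> A i \<noteq> {}"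
    and levels_disjoint: "i \<in> {1..k} \<Longrightarrow> j \<in> {1..k} \<Longrightarrow> i \<noteq> j \<Longrightarrow> A i \<inter> A j = {}"
    and levels_linear: "i \<in> {1..k} \<Longrightarrow> j \<in> {1..k} \<Longrightarrow> sqle P (A i) (A j) \<or> sqle P (A j) (A i)"
    and consec_regular_bip: "t \<in> {2..k} \<Longrightarrow> consec P A t p s \<Longrightarrow> regular_bip (A p) (A s)"

lemma regular_levels_if_regular_poset:
  assumes "regular_poset P A k"
  shows "regular_levels P A k"
proof -
  have "finite P" "2 \<le> k" "\<forall>i\<in>{1..k}. maximum_antichain P (A i) \<and> A i \<noteq> {}"
    "\<forall>i\<in>{1..k}. \<forall>j\<in>{1..k}. i \<noteq> j \<longrightarrow> A i \<inter> A j = {}"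
    "\<forall>i\<in>{1..k}. \<forall>j\<in>{1..k}. sqle P (A i) (A j) \<or> sqle P (A j) (A i)"
    "\<forall>t\<in>{2..k}. \<forall>p s. consec P A t p s \<longrightarrow> regular_bip (A p) (A s)"
    using assms unfolding regular_poset_def by - (elim conjE; assumption)+
  then show ?thesis by unfold_locales blast+
qed

context regular_levels
begin

lemma level_antichain: "i \<in> {1..k} \<Longrightarrow> antichain P (A i)"
  using level_maximum_antichain by (simp add: maximum_antichain_def)

lemma card_level: "i \<in> {1..k} \<Longrightarrow> card (A i) = width P"
  using level_maximum_antichain by (simp add: maximum_antichain_def)

lemma level_subset: "i \<in> {1..k} \<Longrightarrow> A i \<subseteq> P"
  using level_antichain by (simp add: antichain_def)

lemma finite_level: "i \<in> {1..k} \<Longrightarrow> finite (A i)"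
  using finite_subset[OF level_subset finite_carrier] .

lemma level_eq_if_mem:
  assumes "i \<in> {1..k}" and "j \<in> {1..k}" and "x \<in> A i" and "x \<in> A j"
  shows "i = j"
  using assms levels_disjoint by blast

lemma level_comparable:
  assumes i: "i \<in> {1..k}" and z: "z \<in> P" "z \<notin> A i"
  shows "\<exists>a\<in>A i. a < z \<or> z < a"
proof (rule ccontr)
  assume "\<not> ?thesis"
  then have "antichain P (insert z (A i))"
    using level_antichain[OF i] z(1) unfolding antichain_def by (auto simp: order_le_less)
  then have "card (insert z (A i)) \<le> width P" by (rule card_antichain_le_width[OF finite_carrier])
  then show False using finite_level[OF i] z(2) card_level[OF i] by simp
qed

lemma level_below:
  assumes i: "i \<in> {1..k}" and j: "j \<in> {1..k}" and "sqle P (A i) (A j)" and z: "z \<in> A j"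
  shows "\<exists>a\<in>A i. a \<le> z"
proof (cases "z \<in> A i")
  case False
  then obtain a where a: "a \<in> A i" "a < z \<or> z < a"
    using level_comparable[OF i] level_subset[OF j] z by blast
  have "\<not> z < a"
  proof
    assume "z < a"
    obtain z' where "z' \<in> A j" "a \<le> z'"
      using \<open>sqle P (A i) (A j)\<close> a(1) unfolding sqle_def down_def by blast
    with \<open>z < a\<close> have "z \<le> z'" "z \<noteq> z'" by auto
    with \<open>z' \<in> A j\<close> z level_antichain[OF j] show False unfolding antichain_def by blast
  qed
  with a show ?thesis by (auto intro: less_imp_le)
qed auto

lemma level_above:
  assumes i: "i \<in> {1..k}" and j: "j \<in> {1..k}" and "sqlt P (A i) (A j)" and x: "x \<in> A i"
  shows "\<exists>y\<in>A j. x < y"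
proof -
  obtain y where y: "y \<in> A j" "x \<le> y"
    using assms(3) x unfolding sqlt_def sqle_def down_def by blast
  have "i \<noteq> j" using assms(3) by (auto simp: sqlt_def)
  then have "x \<noteq> y" using levels_disjoint[OF i j] x y(1) by blast
  with y show ?thesis by (auto simp: order_le_less)
qed

lemma sqle_level_if_le:
  assumes i: "i \<in> {1..k}" and j: "j \<in> {1..k}" and "x \<in> A i" and "z \<in> A j" and "x \<le> z"
  shows "sqle P (A i) (A j)"
proof (rule ccontr)
  assume not_le: "\<not> sqle P (A i) (A j)"
  then obtain a where a: "a \<in> A i" "z \<le> a"
    using levels_linear[OF i j] \<open>z \<in> A j\<close> unfolding sqle_def down_def by blast
  with assms(3,5) level_antichain[OF i] have "x = a" unfolding antichain_def by (meson order_trans)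
  with a(2) \<open>x \<le> z\<close> have "z = x" by simp
  with assms(3,4) have "i = j" using level_eq_if_mem[OF i j] by simp
  with not_le level_subset[OF i] show False unfolding sqle_def down_def by blast
qed

lemma sqlt_level_trans:
  assumes "i \<in> {1..k}" and "j \<in> {1..k}" and "l \<in> {1..k}"
    and ij: "sqlt P (A i) (A j)" and jl: "sqlt P (A j) (A l)"
  shows "sqlt P (A i) (A l)"
proof -
  have "sqle P (A i) (A l)" using ij jl sqle_trans unfolding sqlt_def by blast
  moreover have "A i \<noteq> A l"
  proof
    assume "A i = A l"
    with ij jl have "A j = A l"
      using antichain_sqle_antisym level_antichain assms(2,3) unfolding sqlt_def by metis
    with jl show False by (simp add: sqlt_def)
  qed
  ultimately show ?thesis by (simp add: sqlt_def)
qed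

definition between :: "nat \<Rightarrow> nat \<Rightarrow> nat set" where
  "between i j = {q \<in> {1..k}. sqlt P (A i) (A q) \<and> sqlt P (A q) (A j)}"

lemma finite_between: "finite (between i j)"
  by (simp add: between_def)

lemma between_mono:
  assumes i: "i \<in> {1..k}" and j: "j \<in> {1..k}" and q: "q \<in> between i j"
  shows "between i q \<subseteq> between i j" and "between q j \<subseteq> between i j"
proof -
  have q': "q \<in> {1..k}" "sqlt P (A i) (A q)" "sqlt P (A q) (A j)"
    using q by (simp_all add: between_def)
  show "between i q \<subseteq> between i j" "between q j \<subseteq> between i j"
    using sqlt_level_trans[OF _ q'(1) j _ q'(3)] sqlt_level_trans[OF i q'(1) _ q'(2)]
    unfolding between_def by auto
qed

lemma card_between_less:
  assumes "i \<in> {1..k}" and "j \<in> {1..k}" and q: "q \<in> between i j"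
  shows "card (between i q) < card (between i j)" and "card (between q j) < card (between i j)"
proof -
  have "q \<notin> between i q" "q \<notin> between q j" by (simp_all add: between_def sqlt_def)
  with between_mono[OF assms] q
  show "card (between i q) < card (between i j)" "card (between q j) < card (between i j)"
    by (auto intro!: psubset_card_mono finite_between)
qed

definition regular_pair :: "nat \<Rightarrow> nat \<Rightarrow> bool" where
  "regular_pair i j \<longleftrightarrow> i \<in> {1..k} \<and> j \<in> {1..k} \<and> sqlt P (A i) (A j) \<and> regular_bip (A i) (A j)"

lemma regular_pair_if_consec:
  assumes "t \<in> {2..k}" and "consec P A t p s"
  shows "regular_pair p s"
  using assms consec_regular_bip[OF assms] unfolding consec_def regular_pair_def by auto

lemma regular_pair_disjoint: "regular_pair i j \<Longrightarrow> A i \<inter> A j = {}"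
  unfolding regular_pair_def sqlt_def using levels_disjoint by blast

lemma regular_pair_matching:
  assumes "regular_pair i j"
  obtains f where "perfect_matching (A i) (A j) f"
proof -
  have ij: "i \<in> {1..k}" "j \<in> {1..k}" "sqlt P (A i) (A j)" "regular_bip (A i) (A j)"
    using assms by (simp_all add: regular_pair_def)
  obtain x where x: "x \<in> A i" using level_nonempty[OF ij(1)] by blast
  then obtain y where "y \<in> A j" "x < y" using level_above[OF ij(1-3)] by blast
  with x ij(4) show ?thesis using that unfolding regular_bip_def by blast
qed

lemma level_matching:
  assumes "i \<in> {1..k}" and "j \<in> {1..k}" and "sqle P (A i) (A j)"
  shows "\<exists>g. bij_betw g (A i) (A j) \<and> (\<forall>z\<in>A i. z \<le> g z)"
  using assms
proof (induction "card (between i j)" arbitrary: i j rule: less_induct)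
  case less
  consider "A i = A j" | "A i \<noteq> A j" "between i j = {}" | q where "q \<in> between i j" by blast
  then show ?case
  proof cases
    case 1
    then show ?thesis by (intro exI[of _ id]) auto
  next
    case 2
    with less.prems have "consec P A k i j" by (auto simp: consec_def between_def sqlt_def)
    then have "regular_pair i j" using regular_pair_if_consec two_le_k by auto
    then obtain f where "perfect_matching (A i) (A j) f" by (rule regular_pair_matching)
    then show ?thesis unfolding perfect_matching_def by (blast intro: less_imp_le)
  next
    case 3
    then have q: "q \<in> {1..k}" "sqle P (A i) (A q)" "sqle P (A q) (A j)"
      by (simp_all add: between_def sqlt_def)
    obtain g1 where g1: "bij_betw g1 (A i) (A q)" "\<forall>z\<in>A i. z \<le> g1 z"
      using less.hyps[OF card_between_less(1)[OF less.prems(1,2) 3] less.prems(1) q(1,2)] by blast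
    obtain g2 where g2: "bij_betw g2 (A q) (A j)" "\<forall>z\<in>A q. z \<le> g2 z"
      using less.hyps[OF card_between_less(2)[OF less.prems(1,2) 3] q(1) less.prems(2) q(3)]
      by blast
    have "z \<le> g2 (g1 z)" if "z \<in> A i" for z
      using that g1 g2(2) bij_betw_apply order_trans by metis
    with g1(1) g2(1) show ?thesis by (intro exI[of _ "g2 \<circ> g1"]) (auto intro: bij_betw_trans)
  qed
qed

definition node_at :: "nat \<Rightarrow> nat \<Rightarrow> 'a set \<times> 'a set \<Rightarrow> bool" where
  "node_at i j N \<longleftrightarrow> regular_pair i j \<and> comp_node (A i) (A j) N"

lemma is_nodeE:
  assumes "is_node P A k N"
  obtains t p s where "t \<in> {2..k}" and "consec P A t p s" and "node_at p s N"
  using assms regular_pair_if_consec unfolding is_node_def node_at_def by blast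

lemma node_atD:
  assumes "node_at i j N"
  shows "i \<in> {1..k}" and "j \<in> {1..k}" and "comp_node (A i) (A j) N"
    and "fst N \<subseteq> A i" and "snd N \<subseteq> A j"
proof -
  show "i \<in> {1..k}" "j \<in> {1..k}" and N: "comp_node (A i) (A j) N"
    using assms by (simp_all add: node_at_def regular_pair_def)
  show "fst N \<subseteq> A i" "snd N \<subseteq> A j" using comp_node_subset[OF N] by simp_all
qed

lemma node_at_matching:
  assumes "node_at i j N"
  obtains f where "perfect_matching (A i) (A j) f" and "perfect_matching (fst N) (snd N) f"
  using assms perfect_matching_component regular_pair_matching unfolding node_at_def by metis

lemma node_at_nonempty:
  assumes "node_at i j N"
  shows "fst N \<noteq> {}" and "snd N \<noteq> {}"
proof -
  obtain f where "perfect_matching (A i) (A j) f" using assms by (rule node_at_matching)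
  then show "fst N \<noteq> {}" "snd N \<noteq> {}" using comp_node_nonempty node_atD(3)[OF assms] by blast+
qed

lemma finite_node_at:
  assumes "node_at i j N"
  shows "finite (fst N)" and "finite (snd N)"
  using finite_subset[OF node_atD(4)[OF assms] finite_level[OF node_atD(1)[OF assms]]]
    finite_subset[OF node_atD(5)[OF assms] finite_level[OF node_atD(2)[OF assms]]] by simp_all

lemma card_node_at:
  assumes "node_at i j N"
  shows "card (fst N) = card (snd N)"
proof -
  obtain f where "perfect_matching (fst N) (snd N) f" using assms by (rule node_at_matching)
  then show ?thesis unfolding perfect_matching_def using bij_betw_same_card by blast
qed

lemma node_at_subset_Int_node:
  assumes "node_at i j N"
  shows "fst N \<union> snd N \<subseteq> Int_node P N"
proof -
  obtain f where f: "perfect_matching (A i) (A j) f" using assms by (rule node_at_matching)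
  have "A i \<union> A j \<subseteq> P" using level_subset node_atD(1,2)[OF assms] by blast
  with f show ?thesis by (rule comp_node_subset_Int_node[OF _ node_atD(3)[OF assms]])
qed

lemma splits_le_gain_node_at:
  assumes "node_at i j N"
  shows "of_bool (splits P x N) \<le> gain P x N"
proof -
  obtain f where f: "perfect_matching (A i) (A j) f" using assms by (rule node_at_matching)
  have "regular_bip (A i) (A j)" and "A i \<inter> A j = {}"
    using assms regular_pair_disjoint by (simp_all add: node_at_def regular_pair_def)
  with f show ?thesis
    using splits_le_gain finite_level level_subset node_atD[OF assms] by blast
qed

lemma gain_le_width:
  assumes N: "node_at i j N" and x: "x \<in> fst N"
  shows "gain P x N \<le> int (card (fst N)) - 1"
proof -
  have "card (up P {x} \<inter> snd N) \<le> card (snd N)"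
    using finite_node_at(2)[OF N] by (rule card_mono) blast
  moreover have "x \<in> up P {x} \<inter> fst N"
    using x node_atD(1,4)[OF N] level_subset unfolding up_def by blast
  then have "card (up P {x} \<inter> fst N) \<noteq> 0" using finite_node_at(1)[OF N] by auto
  ultimately show ?thesis using card_node_at[OF N] unfolding gain_def by linarith
qed

lemma finite_nodes: "finite {N. is_node P A k N}"
proof (rule finite_subset)
  show "{N. is_node P A k N} \<subseteq> Pow P \<times> Pow P"
  proof
    fix N assume "N \<in> {N. is_node P A k N}"
    then obtain t p s where "t \<in> {2..k}" "consec P A t p s" "node_at p s N" by (auto elim: is_nodeE)
    then have "fst N \<subseteq> P" "snd N \<subseteq> P" using node_atD level_subset by blast+
    then show "N \<in> Pow P \<times> Pow P" by (simp add: mem_Times_iff)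
  qed
  show "finite (Pow P \<times> Pow P)" using finite_carrier by simp
qed

lemma node_width_le_width:
  assumes "node_at i j N"
  shows "node_width N \<le> width P"
  using card_mono[OF finite_level node_atD(4)] card_level node_atD(1) assms
  unfolding node_width_def by metis

text \<open>Levels are inserted in the order of their indices, so the first level inserted between
  \<open>A p\<close> and \<open>A s\<close> is \<open>A (Min (between p s))\<close>.\<close>

lemma childof_level:
  assumes N: "node_at p s N" and C: "childof P A k C N"
  shows "between p s \<noteq> {}"
    and "comp_node (A p) (A (Min (between p s))) C \<or> comp_node (A (Min (between p s))) (A s) C"
proof -
  obtain t p' s' where t: "t \<in> {3..k}" "consec P A (t - 1) p' s'"
      "sqlt P (A p') (A t)" "sqlt P (A t) (A s')" "comp_node (A p') (A s') N"
      "comp_node (A p') (A t) C \<or> comp_node (A t) (A s') C"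
    using C unfolding childof_def by blast
  have p's': "p' \<in> {1..k}" "s' \<in> {1..k}" using t(1,2) unfolding consec_def by auto
  obtain x y where "x \<in> fst N" "y \<in> snd N" using node_at_nonempty[OF N] by blast
  then have "p' = p" "s' = s"
    using comp_node_subset[OF t(5)] node_atD[OF N] level_eq_if_mem p's' by blast+
  with t have cons: "consec P A (t - 1) p s" and tin: "t \<in> between p s"
    by (simp_all add: between_def)
  have "Min (between p s) = t"
  proof (rule Min_eqI[OF finite_between _ tin])
    fix q assume q: "q \<in> between p s"
    show "t \<le> q"
    proof (rule ccontr)
      assume "\<not> t \<le> q"
      with q have "q \<in> {1..t - 1}" by (auto simp: between_def)
      with q cons show False unfolding consec_def between_def by blast
    qed
  qed
  with tin t(6) \<open>p' = p\<close> \<open>s' = s\<close>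
  show "between p s \<noteq> {}"
    and "comp_node (A p) (A (Min (between p s))) C \<or> comp_node (A (Min (between p s))) (A s) C"
    by auto
qed

lemma consec_Min_between:
  assumes t0: "t0 \<in> {2..k}" and c: "consec P A t0 p s" and ne: "between p s \<noteq> {}"
  defines "t \<equiv> Min (between p s)"
  shows "t \<in> between p s" and "t \<in> {2..k}" and "consec P A t p t" and "consec P A t t s"
proof -
  show t_between: "t \<in> between p s" unfolding t_def using finite_between ne by (rule Min_in)
  then have t: "t \<in> {1..k}" "sqlt P (A p) (A t)" "sqlt P (A t) (A s)"
    by (simp_all add: between_def)
  have ps: "p \<in> {1..t0}" "s \<in> {1..t0}" and none: "between p s \<inter> {1..t0} = {}"
    using c t0 by (auto simp: consec_def between_def)
  have pk: "p \<in> {1..k}" "s \<in> {1..k}" using ps t0 by auto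
  have "t0 < t" using none t_between t(1) by (rule_tac ccontr) auto
  with t0 t(1) show "t \<in> {2..k}" by simp
  have "between p t \<inter> {1..t} = {}" and "between t s \<inter> {1..t} = {}"
  proof -
    have "q = t" if "q \<in> {1..t}" "q \<in> between p s" for q
      using Min_le[OF finite_between that(2)] that(1) unfolding t_def by simp
    moreover have "t \<notin> between p t" "t \<notin> between t s" by (simp_all add: between_def sqlt_def)
    ultimately show "between p t \<inter> {1..t} = {}" "between t s \<inter> {1..t} = {}"
      using between_mono[OF pk t_between] by blast+
  qed
  moreover have "p \<in> {1..t}" "s \<in> {1..t}" "t \<in> {1..t}" "{1..t} \<subseteq> {1..k}"
    using ps \<open>t0 < t\<close> t(1) by auto
  ultimately show "consec P A t p t" and "consec P A t t s"
    using t(2,3) unfolding consec_def between_def by blast+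
qed

section \<open>Inserting a level between two levels\<close>

definition lower_children :: "nat \<Rightarrow> nat \<Rightarrow> 'a set \<times> 'a set \<Rightarrow> ('a set \<times> 'a set) set" where
  "lower_children p t N = {C. comp_node (A p) (A t) C \<and> fst C \<subseteq> fst N}"

definition upper_children :: "nat \<Rightarrow> nat \<Rightarrow> 'a set \<times> 'a set \<Rightarrow> ('a set \<times> 'a set) set" where
  "upper_children t s N = {C. comp_node (A t) (A s) C \<and> snd C \<subseteq> snd N}"

definition middle :: "nat \<Rightarrow> 'a set \<times> 'a set \<Rightarrow> 'a set" where
  "middle t N = {z \<in> A t. \<exists>y\<in>snd N. z < y}"

context
  fixes p t s :: nat and N :: "'a set \<times> 'a set"
  assumes N: "node_at p s N" and pt: "regular_pair p t" and ts: "regular_pair t s"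
begin

lemma three_levels:
  shows "p \<in> {1..k}" "t \<in> {1..k}" "s \<in> {1..k}"
    and "sqle P (A p) (A t)" "sqlt P (A t) (A s)"
    and "A p \<inter> A t = {}" "A t \<inter> A s = {}"
  using pt ts regular_pair_disjoint by (auto simp: regular_pair_def sqlt_def)

lemma lower_below_middle:
  assumes "z \<in> A t"
  obtains a where "a \<in> A p" and "a < z"
proof -
  obtain a where "a \<in> A p" "a \<le> z" using level_below three_levels assms by blast
  moreover have "a \<noteq> z" using calculation(1) assms three_levels(6) by blast
  ultimately show ?thesis using that by simp
qed

lemma lower_adj_closed:
  assumes "v \<in> fst N \<union> middle t N" and "bip_adj (A p) (A t) v w"
  shows "w \<in> fst N \<union> middle t N"
  using assms(2) unfolding bip_adj_def
proof (elim disjE conjE)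
  assume vw: "v \<in> A p" "w \<in> A t" "v < w"
  then have "v \<in> fst N" using assms(1) three_levels(6) by (auto simp: middle_def)
  obtain y where "y \<in> A s" "w < y" using level_above three_levels vw(2) by blast
  with vw have "y \<in> snd N" using comp_node_closed_up[OF node_atD(3)[OF N] \<open>v \<in> fst N\<close>] by simp
  with vw \<open>w < y\<close> show ?thesis by (auto simp: middle_def)
next
  assume wv: "v \<in> A t" "w \<in> A p" "w < v"
  then obtain y where "y \<in> snd N" "v < y" using assms(1) node_atD(4)[OF N] three_levels(6)
    by (auto simp: middle_def)
  with wv show ?thesis using comp_node_closed_down[OF node_atD(3)[OF N]] by auto
qed

lemma upper_adj_closed:
  assumes "v \<in> snd N \<union> middle t N" and "bip_adj (A t) (A s) v w"
  shows "w \<in> snd N \<union> middle t N"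
  using assms(2) unfolding bip_adj_def
proof (elim disjE conjE)
  assume vw: "v \<in> A t" "w \<in> A s" "v < w"
  then obtain y where "y \<in> snd N" "v < y" using assms(1) node_atD(5)[OF N] three_levels(7)
    by (auto simp: middle_def)
  obtain a where "a \<in> A p" "a < v" using lower_below_middle[OF vw(1)] .
  with \<open>v < y\<close> \<open>y \<in> snd N\<close> have "a \<in> fst N"
    using comp_node_closed_down[OF node_atD(3)[OF N]] by auto
  with \<open>a < v\<close> vw show ?thesis using comp_node_closed_up[OF node_atD(3)[OF N]] by auto
next
  assume wv: "v \<in> A s" "w \<in> A t" "w < v"
  then have "v \<in> snd N" using assms(1) three_levels(7) by (auto simp: middle_def)
  with wv show ?thesis by (auto simp: middle_def)
qed

lemma lower_component_subset:
  assumes "a \<in> fst N"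
  shows "comp_node (A p) (A t) (component_of (A p) (A t) a)"
    and "fst (component_of (A p) (A t) a) \<subseteq> fst N"
    and "snd (component_of (A p) (A t) a) \<subseteq> middle t N"
proof -
  let ?C = "component_of (A p) (A t) a"
  show C: "comp_node (A p) (A t) ?C" using assms node_atD(4)[OF N] comp_node_component_of by blast
  have "fst ?C \<union> snd ?C \<subseteq> fst N \<union> middle t N"
    using assms lower_adj_closed by (intro component_of_subset_closed) auto
  moreover have "fst N \<subseteq> A p" "middle t N \<subseteq> A t" using node_atD(4)[OF N] by (auto simp: middle_def)
  ultimately show "fst ?C \<subseteq> fst N" "snd ?C \<subseteq> middle t N"
    using comp_node_subset[OF C] three_levels(6) by blast+
qed

lemma upper_component_subset:
  assumes "y \<in> snd N"
  shows "comp_node (A t) (A s) (component_of (A t) (A s) y)"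
    and "fst (component_of (A t) (A s) y) \<subseteq> middle t N"
    and "snd (component_of (A t) (A s) y) \<subseteq> snd N"
proof -
  let ?C = "component_of (A t) (A s) y"
  show C: "comp_node (A t) (A s) ?C" using assms node_atD(5)[OF N] comp_node_component_of by blast
  have "fst ?C \<union> snd ?C \<subseteq> snd N \<union> middle t N"
    using assms upper_adj_closed by (intro component_of_subset_closed) auto
  moreover have "snd N \<subseteq> A s" "middle t N \<subseteq> A t" using node_atD(5)[OF N] by (auto simp: middle_def)
  ultimately show "fst ?C \<subseteq> middle t N" "snd ?C \<subseteq> snd N"
    using comp_node_subset[OF C] three_levels(7) by blast+
qed

lemma lower_children_eq: "lower_children p t N = component_of (A p) (A t) ` fst N"
proof
  show "component_of (A p) (A t) ` fst N \<subseteq> lower_children p t N"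
    using lower_component_subset(1,2) unfolding lower_children_def by blast
  show "lower_children p t N \<subseteq> component_of (A p) (A t) ` fst N"
  proof
    fix C assume C: "C \<in> lower_children p t N"
    then have "node_at p t C" using pt by (simp add: lower_children_def node_at_def)
    then obtain a where "a \<in> fst C" using node_at_nonempty(1) by blast
    with C show "C \<in> component_of (A p) (A t) ` fst N"
      using comp_node_eq_component_of unfolding lower_children_def by blast
  qed
qed

lemma upper_children_eq: "upper_children t s N = component_of (A t) (A s) ` snd N"
proof
  show "component_of (A t) (A s) ` snd N \<subseteq> upper_children t s N"
    using upper_component_subset(1,3) unfolding upper_children_def by blast
  show "upper_children t s N \<subseteq> component_of (A t) (A s) ` snd N"
  proof
    fix C assume C: "C \<in> upper_children t s N"
    then have "node_at t s C" using ts by (simp add: upper_children_def node_at_def)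
    then obtain y where "y \<in> snd C" using node_at_nonempty(2) by blast
    with C show "C \<in> component_of (A t) (A s) ` snd N"
      using comp_node_eq_component_of unfolding upper_children_def by blast
  qed
qed

lemma lower_children_cover:
  shows "\<Union>(fst ` lower_children p t N) = fst N"
    and "\<Union>(snd ` lower_children p t N) = middle t N"
proof -
  have self: "a \<in> fst (component_of (A p) (A t) a)" if "a \<in> fst N" for a
    using that node_atD(4)[OF N] by (auto simp: component_of_def)
  then show "\<Union>(fst ` lower_children p t N) = fst N"
    using lower_component_subset(2) unfolding lower_children_eq by blast
  have "middle t N \<subseteq> \<Union>(snd ` lower_children p t N)"
  proof
    fix z assume "z \<in> middle t N"
    then obtain y where z: "z \<in> A t" "y \<in> snd N" "z < y" by (auto simp: middle_def)
    obtain a where a: "a \<in> A p" "a < z" using lower_below_middle[OF z(1)] .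
    with z have "a \<in> fst N" using comp_node_closed_down[OF node_atD(3)[OF N]] by auto
    then have "z \<in> snd (component_of (A p) (A t) a)"
      using comp_node_closed_up[OF lower_component_subset(1) self] z(1) a(2) by blast
    with \<open>a \<in> fst N\<close> show "z \<in> \<Union>(snd ` lower_children p t N)"
      unfolding lower_children_eq by blast
  qed
  then show "\<Union>(snd ` lower_children p t N) = middle t N"
    using lower_component_subset(3) unfolding lower_children_eq by blast
qed

lemma upper_children_cover:
  shows "\<Union>(fst ` upper_children t s N) = middle t N"
    and "\<Union>(snd ` upper_children t s N) = snd N"
proof -
  have self: "y \<in> snd (component_of (A t) (A s) y)" if "y \<in> snd N" for y
    using that node_atD(5)[OF N] by (auto simp: component_of_def)
  then show "\<Union>(snd ` upper_children t s N) = snd N"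
    using upper_component_subset(3) unfolding upper_children_eq by blast
  have "middle t N \<subseteq> \<Union>(fst ` upper_children t s N)"
  proof
    fix z assume "z \<in> middle t N"
    then obtain y where z: "z \<in> A t" "y \<in> snd N" "z < y" by (auto simp: middle_def)
    then have "z \<in> fst (component_of (A t) (A s) y)"
      using comp_node_closed_down[OF upper_component_subset(1) self] by blast
    with z(2) show "z \<in> \<Union>(fst ` upper_children t s N)" unfolding upper_children_eq by blast
  qed
  then show "\<Union>(fst ` upper_children t s N) = middle t N"
    using upper_component_subset(2) unfolding upper_children_eq by blast
qed

lemma finite_children:
  shows "finite (lower_children p t N)" and "finite (upper_children t s N)"
  using finite_node_at[OF N] by (simp_all add: lower_children_eq upper_children_eq)

lemma lower_upper_children_disjoint: "lower_children p t N \<inter> upper_children t s N = {}"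
proof -
  have "fst C = {}" if "comp_node (A p) (A t) C" "comp_node (A t) (A s) C" for C
    using comp_node_subset(1)[OF that(1)] comp_node_subset(1)[OF that(2)] three_levels(6) by blast
  moreover have "fst C \<noteq> {}" if "comp_node (A p) (A t) C" for C
    using node_at_nonempty(1) that pt by (auto simp: node_at_def)
  ultimately show ?thesis by (auto simp: lower_children_def upper_children_def)
qed

text \<open>The gain telescopes: the lower children account for the step from \<open>fst N\<close> to the
  middle level, the upper children for the step from the middle level to \<open>snd N\<close>.\<close>

lemma sum_gain_children:
  "(\<Sum>C \<in> lower_children p t N \<union> upper_children t s N. gain P x C) = gain P x N"
proof -
  have fin: "finite (A p)" "finite (A t)" "finite (A s)" using finite_level three_levels by auto
  have "(\<Sum>C \<in> lower_children p t N. gain P x C)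
      = int (card (up P {x} \<inter> middle t N)) - int (card (up P {x} \<inter> fst N))"
    using sum_gain_components[OF finite_children(1) _ fin(1,2)] lower_children_cover
    by (simp add: lower_children_def)
  moreover have "(\<Sum>C \<in> upper_children t s N. gain P x C)
      = int (card (up P {x} \<inter> snd N)) - int (card (up P {x} \<inter> middle t N))"
    using sum_gain_components[OF finite_children(2) _ fin(2,3)] upper_children_cover
    by (simp add: upper_children_def)
  ultimately show ?thesis
    by (simp add: sum.union_disjoint finite_children lower_upper_children_disjoint gain_def)
qed

lemma childof_mem_children:
  assumes C: "childof P A k C N" and t: "t = Min (between p s)"
  shows "C \<in> lower_children p t N \<union> upper_children t s N"
proof -
  have Int: "Int_node P C \<subseteq> Int_node P N" using childof_Int_node[OF C] by blast
  consider "comp_node (A p) (A t) C" | "comp_node (A t) (A s) C"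
    using childof_level(2)[OF N C] t by blast
  then show ?thesis
  proof cases
    case 1
    have "fst C \<subseteq> fst N"
    proof
      fix z assume z: "z \<in> fst C"
      then have "z \<in> up P (fst N)"
        using node_at_subset_Int_node[of p t C] 1 pt Int by (auto simp: node_at_def Int_node_def)
      then obtain x where "x \<in> fst N" "x \<le> z" by (auto simp: up_def)
      moreover have "x \<in> A p" "z \<in> A p"
        using calculation(1) z node_atD(4)[OF N] comp_node_subset(1)[OF 1] by blast+
      ultimately show "z \<in> fst N"
        using level_antichain[OF three_levels(1)] by (auto simp: antichain_def)
    qed
    with 1 show ?thesis by (simp add: lower_children_def)
  next
    case 2
    have "snd C \<subseteq> snd N"
    proof
      fix z assume z: "z \<in> snd C"
      then have "z \<in> down P (snd N)"
        using node_at_subset_Int_node[of t s C] 2 ts Int by (auto simp: node_at_def Int_node_def)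
      then obtain y where "y \<in> snd N" "z \<le> y" by (auto simp: down_def)
      moreover have "y \<in> A s" "z \<in> A s"
        using calculation(1) z node_atD(5)[OF N] comp_node_subset(2)[OF 2] by blast+
      ultimately show "z \<in> snd N"
        using level_antichain[OF three_levels(3)] by (auto simp: antichain_def)
    qed
    with 2 show ?thesis by (simp add: upper_children_def)
  qed
qed

end

section \<open>Counting first problematic nodes\<close>

definition split_descendants ::
    "('a set \<times> 'a set) set \<Rightarrow> 'a \<Rightarrow> 'a set \<times> 'a set \<Rightarrow> ('a set \<times> 'a set) set" where
  "split_descendants F x N = {K \<in> F. K \<in> desc P A k N \<and> splits P x K}"

lemma card_split_descendants_le_children:
  assumes N: "node_at p s N" and pt: "regular_pair p t" and ts: "regular_pair t s"
    and "finite F" and "N \<notin> F" and "t = Min (between p s)"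
  shows "int (card (split_descendants F x N))
    \<le> (\<Sum>C \<in> lower_children p t N \<union> upper_children t s N. int (card (split_descendants F x C)))"
proof -
  let ?Ch = "lower_children p t N \<union> upper_children t s N"
  have "split_descendants F x N \<subseteq> (\<Union>C\<in>?Ch. split_descendants F x C)"
  proof
    fix K assume "K \<in> split_descendants F x N"
    then have K: "K \<in> F" "K \<in> desc P A k N" "splits P x K" by (simp_all add: split_descendants_def)
    with assms(5) have "K \<noteq> N" by blast
    with K(2) obtain C where C: "childof P A k C N" "K \<in> desc P A k C" using desc_cases by blast
    from C(1) have "C \<in> ?Ch" by (rule childof_mem_children[OF N pt ts _ assms(6)])
    moreover have "K \<in> split_descendants F x C" using K C(2) by (simp add: split_descendants_def)
    ultimately show "K \<in> (\<Union>C\<in>?Ch. split_descendants F x C)" by blast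
  qed
  moreover have fin_Ch: "finite ?Ch" using finite_children[OF N pt ts] by simp
  moreover have "finite (\<Union>C\<in>?Ch. split_descendants F x C)"
    using fin_Ch assms(4) by (intro finite_UN_I) (simp_all add: split_descendants_def)
  ultimately have "card (split_descendants F x N) \<le> (\<Sum>C\<in>?Ch. card (split_descendants F x C))"
    using card_UN_le card_mono order_trans by metis
  then show ?thesis by (simp only: of_nat_sum[symmetric] of_nat_le_iff)
qed

lemma card_split_descendants_member:
  assumes "N \<in> F" and incomparable: "\<And>K K'. K \<in> F \<Longrightarrow> K' \<in> F \<Longrightarrow> \<not> proper_anc P A k K K'"
  shows "card (split_descendants F x N) \<le> of_bool (splits P x N)"
proof -
  have "split_descendants F x N \<subseteq> {N} \<inter> Collect (splits P x)"
  proof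
    fix K assume "K \<in> split_descendants F x N"
    then have K: "K \<in> F" "K \<in> desc P A k N" "splits P x K" by (simp_all add: split_descendants_def)
    moreover have "\<not> proper_anc P A k N K" using incomparable assms(1) K(1) by blast
    ultimately show "K \<in> {N} \<inter> Collect (splits P x)" by (auto simp: desc_def)
  qed
  then have "card (split_descendants F x N) \<le> card ({N} \<inter> Collect (splits P x))"
    by (rule card_mono[rotated]) simp
  also have "\<dots> = of_bool (splits P x N)" by (cases "splits P x N") auto
  finally show ?thesis .
qed

text \<open>Induction down the node tree: a member \<open>N\<close> of \<open>F\<close> has no other member below it, and
  otherwise the gain of \<open>N\<close> is the sum of the gains of its children.\<close>

lemma card_split_descendants_le_gain:
  assumes fin: "finite F" and incomparable: "\<And>K K'. K \<in> F \<Longrightarrow> K' \<in> F \<Longrightarrow> \<not> proper_anc P A k K K'"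
    and "t0 \<in> {2..k}" and "consec P A t0 p s" and "comp_node (A p) (A s) N"
  shows "int (card (split_descendants F x N)) \<le> gain P x N"
  using assms(3-5)
proof (induction "card (between p s)" arbitrary: t0 p s N rule: less_induct)
  case less
  have N: "node_at p s N" using less.prems regular_pair_if_consec by (simp add: node_at_def)
  have gain_N: "of_bool (splits P x N) \<le> gain P x N" by (rule splits_le_gain_node_at[OF N])
  consider (member) "N \<in> F" | (leaf) "N \<notin> F" "between p s = {}"
    | (inner) "N \<notin> F" "between p s \<noteq> {}" by blast
  then show ?case
  proof cases
    case member
    with incomparable have "int (card (split_descendants F x N)) \<le> of_bool (splits P x N)"
      by (metis card_split_descendants_member of_nat_le_iff of_nat_of_bool)
    with gain_N show ?thesis by linarith
  next
    case leaf
    have "K = N" if "K \<in> desc P A k N" for K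
      using desc_cases[OF that] childof_level(1)[OF N] leaf(2) by blast
    with leaf(1) have "split_descendants F x N = {}" by (auto simp: split_descendants_def)
    with gain_N show ?thesis by (cases "splits P x N") simp_all
  next
    case inner
    define t where "t = Min (between p s)"
    note t = consec_Min_between[OF less.prems(1,2) inner(2), folded t_def]
    have pt: "regular_pair p t" and ts: "regular_pair t s"
      using regular_pair_if_consec[OF t(2)] t(3,4) by blast+
    have IH: "int (card (split_descendants F x C)) \<le> gain P x C"
      if "C \<in> lower_children p t N \<union> upper_children t s N" for C
      using that less.hyps[OF card_between_less(1)[OF node_atD(1,2)[OF N] t(1)] t(2,3)]
        less.hyps[OF card_between_less(2)[OF node_atD(1,2)[OF N] t(1)] t(2,4)]
      unfolding lower_children_def upper_children_def by blast
    have "int (card (split_descendants F x N))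
        \<le> (\<Sum>C \<in> lower_children p t N \<union> upper_children t s N. int (card (split_descendants F x C)))"
      by (rule card_split_descendants_le_children[OF N pt ts fin inner(1) t_def])
    also have "\<dots> \<le> (\<Sum>C \<in> lower_children p t N \<union> upper_children t s N. gain P x C)"
      using IH by (rule sum_mono)
    also have "\<dots> = gain P x N" by (rule sum_gain_children[OF N pt ts])
    finally show ?thesis .
  qed
qed

lemma desc_levels_sqle:
  assumes M: "node_at a b M" and K: "node_at p s K" and desc: "K \<in> desc P A k M"
  shows "sqle P (A a) (A p)" and "sqle P (A s) (A b)"
proof -
  have sub: "fst K \<union> snd K \<subseteq> up P (fst M) \<inter> down P (snd M)"
    using node_at_subset_Int_node[OF K] desc_Int_node[OF desc] by (auto simp: Int_node_def)
  obtain z y where z: "z \<in> fst K" and y: "y \<in> snd K" using node_at_nonempty[OF K] by blast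
  obtain x where x: "x \<in> fst M" "x \<le> z" using sub z by (auto simp: up_def)
  obtain y' where y': "y' \<in> snd M" "y \<le> y'" using sub y by (auto simp: down_def)
  show "sqle P (A a) (A p)"
    using sqle_level_if_le[OF node_atD(1)[OF M] node_atD(1)[OF K] _ _ x(2)] x(1) z
      node_atD(4)[OF M] node_atD(4)[OF K] by blast
  show "sqle P (A s) (A b)"
    using sqle_level_if_le[OF node_atD(2)[OF K] node_atD(2)[OF M] _ _ y'(2)] y'(1) y
      node_atD(5)[OF M] node_atD(5)[OF K] by blast
qed

lemma mem_fst_if_le_descendant:
  assumes M: "node_at a b M" and K: "node_at p s K" and desc: "K \<in> desc P A k M"
    and x: "x \<in> A a" and z: "z \<in> fst K" and "x \<le> z"
  shows "x \<in> fst M"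
proof -
  obtain y where y: "y \<in> snd M" "z \<le> y"
    using z node_at_subset_Int_node[OF K] desc_Int_node[OF desc]
    by (auto simp: Int_node_def down_def)
  with \<open>x \<le> z\<close> have "x \<le> y" by (blast intro: order_trans)
  moreover have "x \<noteq> y"
    using x y(1) node_atD(5)[OF M] M regular_pair_disjoint by (auto simp: node_at_def)
  ultimately show "x \<in> fst M" using comp_node_closed_down[OF node_atD(3)[OF M] y(1) x] by simp
qed

text \<open>Pull \<open>fst K\<close> back to the level of \<open>fst M\<close> along a level matching \<open>g\<close>. If no element of
  \<open>fst M\<close> splits \<open>K\<close>, every pulled-back element lies below all of \<open>fst K\<close>, hence below the
  images of all pulled-back elements under the matching of \<open>M\<close> that passes through \<open>K\<close>.\<close>

lemma has_dilworth_clique_if_unsplit: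
  assumes M: "node_at a b M" and K: "node_at p s K" and desc: "K \<in> desc P A k M"
    and unsplit: "\<forall>x\<in>fst M. \<not> splits P x K" and c: "c \<le> card (fst K)"
  shows "has_dilworth_clique M c"
proof -
  note M' = node_atD[OF M] and K' = node_atD[OF K]
  obtain g where g: "bij_betw g (A a) (A p)" "\<forall>z\<in>A a. z \<le> g z"
    using level_matching[OF M'(1) K'(1) desc_levels_sqle(1)[OF M K desc]] by blast
  obtain h where h: "bij_betw h (A s) (A b)" "\<forall>z\<in>A s. z \<le> h z"
    using level_matching[OF K'(2) M'(2) desc_levels_sqle(2)[OF M K desc]] by blast
  obtain \<phi> where \<phi>: "perfect_matching (A p) (A s) \<phi>" using K by (rule node_at_matching)
  then have \<phi>': "bij_betw \<phi> (A p) (A s)" "\<forall>z\<in>A p. z < \<phi> z" by (simp_all add: perfect_matching_def)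
  have f: "perfect_matching (fst M) (snd M) (h \<circ> \<phi> \<circ> g)"
    using perfect_matching_component[OF perfect_matching_compose_le[OF g \<phi> h] M'(3)] .
  define G where "G = {x \<in> A a. g x \<in> fst K}"
  have card_G: "card G = card (fst K)"
    unfolding G_def using g(1) K'(4) by (rule card_bij_betw_preimage)
  have G_M: "G \<subseteq> fst M"
    using mem_fst_if_le_descendant[OF M K desc] g(2) unfolding G_def by blast
  have clique: "x < (h \<circ> \<phi> \<circ> g) x'" if "x \<in> G" "x' \<in> G" for x x'
  proof -
    have "g x \<in> up P {x} \<inter> fst K"
      using that(1) g(2) K'(1,4) level_subset by (auto simp: G_def up_def)
    then have "fst K \<subseteq> up P {x}" using unsplit G_M that(1) unfolding splits_def by blast
    have gx': "g x' \<in> A p" "g x' \<in> fst K" using that(2) K'(4) by (auto simp: G_def)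
    with \<open>fst K \<subseteq> up P {x}\<close> have "x \<le> g x'" by (auto simp: up_def)
    also have "g x' < \<phi> (g x')" using \<phi>'(2) gx'(1) by blast
    also have "\<phi> (g x') \<le> h (\<phi> (g x'))" using h(2) bij_betw_apply[OF \<phi>'(1) gx'(1)] by blast
    finally show ?thesis by simp
  qed
  have "finite G" using finite_subset[OF _ finite_level[OF M'(1)]] by (auto simp: G_def)
  with c card_G show ?thesis using has_dilworth_cliqueI[OF f G_M _ _ clique] by simp
qed

lemma first_problematic_split:
  assumes probM: "problematic P A k M" and M: "node_at a b M" and K: "first_problematic P A k M K"
  shows "\<exists>x\<in>fst M. splits P x K"
proof (rule ccontr)
  assume unsplit: "\<not> (\<exists>x\<in>fst M. splits P x K)"
  have desc: "K \<in> desc P A k M" and probK: "problematic P A k K"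
    using K by (simp_all add: first_problematic_def)
  obtain t p s where "t \<in> {2..k}" "consec P A t p s" "node_at p s K"
    using probK unfolding problematic_def by (blast elim: is_nodeE)
  moreover have "nat \<lceil>sqrt (real (width P))\<rceil> \<le> card (fst K)"
  proof -
    have "\<lceil>sqrt (real (width P))\<rceil> \<le> \<lfloor>sqrt (real (width P))\<rfloor> + 1" by linarith
    with probK show ?thesis unfolding problematic_def node_width_def by linarith
  qed
  ultimately have "has_dilworth_clique M (nat \<lceil>sqrt (real (width P))\<rceil>)"
    using has_dilworth_clique_if_unsplit[OF M _ desc] unsplit by blast
  with probM show False unfolding problematic_def by blast
qed

lemma card_first_problematic_le:
  assumes probM: "problematic P A k M"
  shows "card {K. first_problematic P A k M K \<and> charac P K = c}
    \<le> node_width M * (node_width M - 1)"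
proof -
  define F where "F = {K. first_problematic P A k M K \<and> charac P K = c}"
  obtain t a b where M: "t \<in> {2..k}" "consec P A t a b" "node_at a b M"
    using probM unfolding problematic_def by (blast elim: is_nodeE)
  have "F \<subseteq> {K. is_node P A k K}" unfolding F_def first_problematic_def problematic_def by blast
  then have fin: "finite F" using finite_nodes by (rule finite_subset)
  have incomparable: "\<not> proper_anc P A k K K'" if "K \<in> F" "K' \<in> F" for K K'
    using that by (intro first_problematic_incomparable[where M = M]) (simp_all add: F_def)
  have "card (split_descendants F x M) \<le> node_width M - 1" if "x \<in> fst M" for x
    using card_split_descendants_le_gain[OF fin incomparable M(1,2) node_atD(3)[OF M(3)], of x]
      gain_le_width[OF M(3) that] unfolding node_width_def by linarith
  then have sum_le: "(\<Sum>x\<in>fst M. card (split_descendants F x M)) \<le> node_width M * (node_width M - 1)"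
    using sum_bounded_above[of "fst M" _ "node_width M - 1"] by (simp add: node_width_def)
  have "F \<subseteq> (\<Union>x\<in>fst M. split_descendants F x M)"
    using first_problematic_split[OF probM M(3)]
    unfolding F_def split_descendants_def first_problematic_def
    by blast
  moreover have "finite (\<Union>x\<in>fst M. split_descendants F x M)"
    using fin by (intro finite_UN_I finite_node_at(1)[OF M(3)]) (simp add: split_descendants_def)
  ultimately have "card F \<le> card (\<Union>x\<in>fst M. split_descendants F x M)" by (intro card_mono)
  also have "\<dots> \<le> (\<Sum>x\<in>fst M. card (split_descendants F x M))"
    by (rule card_UN_le[OF finite_node_at(1)[OF M(3)]])
  finally show ?thesis using sum_le unfolding F_def by linarith
qed

end

theorem lemma20:
  fixes P :: "'a::order set" and A :: "nat \<Rightarrow> 'a set" and k :: nat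
    and N M :: "'a set \<times> 'a set"
    and u u' u'' :: nat and s s' s'' :: enat
  assumes "regular_poset P A k"
    and "active P A k N" and "charac P N = (u, s)"
    and "problematic P A k M"
    and "\<exists>N0 \<in> Qset P A k N. childof P A k M N0"
    and "charac P M = (u', s')"
  shows "card {K. first_problematic P A k M K \<and> charac P K = (u'', s'')} \<le> u'^2
         \<and> u'^2 \<le> (width P)^2"
proof -
  interpret regular_levels P A k using assms(1) by (rule regular_levels_if_regular_poset)
  have u': "u' = node_width M" using assms(6) by (simp add: charac_def)
  obtain t a b where "t \<in> {2..k}" "consec P A t a b" "node_at a b M"
    using assms(4) unfolding problematic_def by (blast elim: is_nodeE)
  then have "u' \<le> width P" using node_width_le_width u' by blast
  moreover have "card {K. first_problematic P A k M K \<and> charac P K = (u'', s'')} \<le> u' * (u' - 1)"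
    using card_first_problematic_le[OF assms(4)] u' by simp
  moreover have "u' * (u' - 1) \<le> u'^2" by (simp add: power2_eq_square)
  ultimately show ?thesis by (simp add: power_mono)
qed

end
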